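(* Let $V$ be a finite nonempty set and $f:\{0,1\}^V\to\{0,1\}^V$. The conjugate of every subnetwork of $f$ is a bijection if and only if $f$ has no even-self-dual and no odd-self-dual subnetwork.
   Context: For $x,y\in\{0,1\}^V$, $x\oplus y$ is componentwise addition mod 2, $1$ denotes the all-ones point, and $\|x\|$ is the number of components of $x$ equal to $1$; $x$ is even (odd) if $\|x\|$ is even (odd). The conjugate of a network $g$ on $W$ is $\tilde g(x)=g(x)\oplus x$. For a nonempty $I\subseteq V$ and $z\in\{0,1\}^{V\setminus I}$, the subnetwork of $f$ induced by $z$ is the network $h:\{0,1\}^I\to\{0,1\}^I$ with $h(x|_I)=f(x)|_I$ for all $x\in\{0,1\}^V$ whose restriction to $V\setminus I$ equals $z$ ($f$ is a subnetwork of itself). A network $g$ on $W$ is self-dual if $g(x\oplus 1)=g(x)\oplus 1$ for all $x$; even (odd) if $\tilde g(\{0,1\}^W)$ is exactly the set of even (odd) points of $\{0,1\}^W$; even-self-dual (odd-self-dual) if both even (odd) and self-dual. *)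

theory Defs
  imports Main
begin

text \<open>Points of {0,1}^I are represented as functions 'v => bool that are False outside I.
  The full vertex set V is the finite nonempty type 'v (V = UNIV).\<close>

definition points :: "'v set \<Rightarrow> ('v \<Rightarrow> bool) set" where
  "points I = {x. \<forall>v. v \<notin> I \<longrightarrow> \<not> x v}"

definition bxor :: "('v \<Rightarrow> bool) \<Rightarrow> ('v \<Rightarrow> bool) \<Rightarrow> ('v \<Rightarrow> bool)" where
  "bxor x y = (\<lambda>v. x v \<noteq> y v)"

definition ones :: "'v set \<Rightarrow> ('v \<Rightarrow> bool)" where
  "ones I = (\<lambda>v. v \<in> I)"

definition weight :: "'v set \<Rightarrow> ('v \<Rightarrow> bool) \<Rightarrow> nat" where
  "weight I x = card {v \<in> I. x v}"

definition conj_net :: "(('v \<Rightarrow> bool) \<Rightarrow> ('v \<Rightarrow> bool)) \<Rightarrow> ('v \<Rightarrow> bool) \<Rightarrow> ('v \<Rightarrow> bool)" where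
  "conj_net g x = bxor (g x) x"

definition subnet :: "(('v \<Rightarrow> bool) \<Rightarrow> ('v \<Rightarrow> bool)) \<Rightarrow> 'v set \<Rightarrow> ('v \<Rightarrow> bool)
    \<Rightarrow> ('v \<Rightarrow> bool) \<Rightarrow> ('v \<Rightarrow> bool)" where
  "subnet f I z = (\<lambda>x. \<lambda>v. v \<in> I \<and> f (\<lambda>w. if w \<in> I then x w else z w) v)"

definition self_dual :: "'v set \<Rightarrow> (('v \<Rightarrow> bool) \<Rightarrow> ('v \<Rightarrow> bool)) \<Rightarrow> bool" where
  "self_dual I g \<longleftrightarrow> (\<forall>x \<in> points I. g (bxor x (ones I)) = bxor (g x) (ones I))"

definition even_net :: "'v set \<Rightarrow> (('v \<Rightarrow> bool) \<Rightarrow> ('v \<Rightarrow> bool)) \<Rightarrow> bool" where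
  "even_net I g \<longleftrightarrow> conj_net g ` points I = {x \<in> points I. even (weight I x)}"

definition odd_net :: "'v set \<Rightarrow> (('v \<Rightarrow> bool) \<Rightarrow> ('v \<Rightarrow> bool)) \<Rightarrow> bool" where
  "odd_net I g \<longleftrightarrow> conj_net g ` points I = {x \<in> points I. odd (weight I x)}"

definition even_self_dual :: "'v set \<Rightarrow> (('v \<Rightarrow> bool) \<Rightarrow> ('v \<Rightarrow> bool)) \<Rightarrow> bool" where
  "even_self_dual I g \<longleftrightarrow> even_net I g \<and> self_dual I g"

definition odd_self_dual :: "'v set \<Rightarrow> (('v \<Rightarrow> bool) \<Rightarrow> ('v \<Rightarrow> bool)) \<Rightarrow> bool" where
  "odd_self_dual I g \<longleftrightarrow> odd_net I g \<and> self_dual I g"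

end

theory Submission imports Defs begin

text \<open>Induction on \<open>|I|\<close>. Fixing input \<open>i\<close> of a subnetwork to \<open>a\<close> and forgetting output
  \<open>i\<close> of its conjugate \<open>g\<close> yields the conjugate of a subnetwork on \<open>I - {i}\<close>, a bijection by
  induction. Hence a value \<open>y\<close> and the value \<open>y\<close> with bit \<open>i\<close> flipped have together exactly
  one preimage in each slice \<open>x i = a\<close>, i.e. their preimage counts add up to \<open>2\<close>. So the count
  of \<open>y\<close> is \<open>c\<close> or \<open>2 - c\<close> according to the parity of \<open>y\<close>. For \<open>c = 1\<close>, \<open>g\<close> is a bijection;
  otherwise the image of \<open>g\<close> consists of the even or of the odd points, and the two preimages
  of a value differ in every coordinate, i.e. \<open>g (x \<oplus> 1) = g x\<close>, which is self-duality of the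
  subnetwork. Conversely, an even or odd conjugate misses half the points.\<close>

lemma points_empty: "points {} = {\<lambda>_. False}"
  unfolding points_def by auto

lemma fun_upd_in_points:
  "x \<in> points I \<Longrightarrow> i \<in> I \<Longrightarrow> x(i := a) \<in> points I"
  unfolding points_def by auto

lemma weight_eq_0_iff:
  fixes x :: "'v::finite \<Rightarrow> bool"
  shows "x \<in> points I \<Longrightarrow> weight I x = 0 \<longleftrightarrow> x = (\<lambda>_. False)"
  unfolding points_def weight_def by (auto simp: fun_eq_iff)

lemma weight_unset:
  fixes x :: "'v::finite \<Rightarrow> bool"
  assumes "i \<in> I" "x i"
  shows "weight I (x(i := False)) = weight I x - 1"
proof -
  have "{v \<in> I. (x(i := False)) v} = {v \<in> I. x v} - {i}" by auto
  thus ?thesis using assms unfolding weight_def by simp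
qed

lemma card_fiber_bij_betw:
  assumes "bij_betw p A B" "b \<in> B"
  shows "card {x \<in> A. p x = b} = 1"
proof -
  obtain a where "a \<in> A" "p a = b" using assms unfolding bij_betw_def by blast
  then have "{x \<in> A. p x = b} = {a}" using assms unfolding bij_betw_def inj_on_def by blast
  thus ?thesis by simp
qed

lemma conj_net_bxor_eq_iff:
  "conj_net h (bxor x c) = conj_net h x \<longleftrightarrow> h (bxor x c) = bxor (h x) c"
proof -
  have "((p \<noteq> (a \<noteq> b)) = (q \<noteq> a)) = (p = (q \<noteq> b))" for p q a b :: bool by auto
  then show ?thesis unfolding conj_net_def bxor_def fun_eq_iff by simp
qed

lemma parity_net_not_bij:
  assumes "I \<noteq> {}" "even_net I h \<or> odd_net I h"
  shows "\<not> bij_betw (conj_net h) (points I) (points I)"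
proof
  assume "bij_betw (conj_net h) (points I) (points I)"
  then have onto: "conj_net h ` points I = points I" by (rule bij_betw_imp_surj_on)
  obtain i where i: "i \<in> I" using assms(1) by blast
  have "{v \<in> I. v = i} = {i}" using i by auto
  then have "(\<lambda>v. v = i) \<in> points I" "weight I (\<lambda>v. v = i) = 1"
    using i unfolding points_def weight_def by auto
  moreover have "(\<lambda>_. False) \<in> points I" "weight I (\<lambda>_. False) = 0"
    unfolding points_def weight_def by auto
  moreover have "points I = {x \<in> points I. even (weight I x)}
      \<or> points I = {x \<in> points I. odd (weight I x)}"
    using assms(2) onto unfolding even_net_def odd_net_def by simp
  ultimately show False by (metis (no_types, lifting) mem_Collect_eq odd_one even_zero)
qed

locale slice_bijective =
  fixes I :: "'v::finite set" and g :: "('v \<Rightarrow> bool) \<Rightarrow> ('v \<Rightarrow> bool)"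
  assumes maps_into: "g ` points I \<subseteq> points I"
    and slice_bij: "\<And>i a. i \<in> I \<Longrightarrow>
      bij_betw (\<lambda>x. (g x)(i := False)) {x \<in> points I. x i = a} (points (I - {i}))"
begin

definition fiber_card :: "('v \<Rightarrow> bool) \<Rightarrow> nat" where
  "fiber_card y = card {x \<in> points I. g x = y}"

lemma image_eq_fiber_card_pos: "g ` points I = {y \<in> points I. 0 < fiber_card y}"
  using maps_into unfolding fiber_card_def by (auto simp: card_gt_0_iff)

lemma fiber_card_flip:
  assumes y: "y \<in> points I" and i: "i \<in> I"
  shows "fiber_card y + fiber_card (y(i := \<not> y i)) = 2"
proof -
  let ?y' = "y(i := \<not> y i)"
  let ?slice = "\<lambda>a. {x \<in> {x \<in> points I. x i = a}. (g x)(i := False) = y(i := False)}"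
  have "y \<noteq> ?y'" by (metis fun_upd_same)
  then have "fiber_card y + fiber_card ?y'
      = card ({x \<in> points I. g x = y} \<union> {x \<in> points I. g x = ?y'})"
    unfolding fiber_card_def by (intro card_Un_disjoint[symmetric]) auto
  also have "{x \<in> points I. g x = y} \<union> {x \<in> points I. g x = ?y'} = ?slice True \<union> ?slice False"
  proof -
    have "(g x)(i := False) = y(i := False) \<longleftrightarrow> g x = y \<or> g x = ?y'" for x
      unfolding fun_eq_iff by (metis fun_upd_apply)
    thus ?thesis by auto
  qed
  also have "card (?slice True \<union> ?slice False) = card (?slice True) + card (?slice False)"
    by (rule card_Un_disjoint) auto
  also have "\<dots> = 2"
  proof -
    have "y(i := False) \<in> points (I - {i})" using y by (auto simp: points_def)
    thus ?thesis using card_fiber_bij_betw[OF slice_bij[OF i, of True]]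
        card_fiber_bij_betw[OF slice_bij[OF i, of False]] by simp
  qed
  finally show ?thesis .
qed

lemma fiber_card_by_parity:
  assumes "y \<in> points I"
  shows "fiber_card y =
    (if even (weight I y) then fiber_card (\<lambda>_. False) else 2 - fiber_card (\<lambda>_. False))"
  using assms
proof (induction "weight I y" arbitrary: y)
  case 0
  then show ?case using weight_eq_0_iff[of y I] by simp
next
  case (Suc n)
  then obtain i where i: "i \<in> I" "y i"
    unfolding weight_def by (metis (no_types, lifting) card.empty empty_Collect_eq nat.distinct(1))
  let ?y\<^sub>0 = "y(i := False)"
  have "?y\<^sub>0 \<in> points I" by (simp add: Suc.prems fun_upd_in_points i(1))
  moreover have "weight I ?y\<^sub>0 = n" using weight_unset[of i I y, OF i] Suc.hyps(2) by simp
  ultimately have IH: "fiber_card ?y\<^sub>0 =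
      (if even n then fiber_card (\<lambda>_. False) else 2 - fiber_card (\<lambda>_. False))"
    using Suc.hyps(1) by blast
  have "fiber_card ?y\<^sub>0 + fiber_card y = 2"
    using fiber_card_flip[OF \<open>?y\<^sub>0 \<in> points I\<close> i(1)] i(2) by (simp add: fun_upd_idem)
  moreover have "fiber_card (\<lambda>_. False) \<le> 2"
    using fiber_card_flip[of "\<lambda>_. False" i] i(1) by (simp add: points_def)
  ultimately show ?case using IH Suc.hyps(2)[symmetric] by auto
qed

lemma bij_if_fiber_card_zero_eq_1:
  assumes "fiber_card (\<lambda>_. False) = 1"
  shows "bij_betw g (points I) (points I)"
proof -
  have card_1: "fiber_card y = 1" if "y \<in> points I" for y
    using fiber_card_by_parity[OF that] assms by simp
  have "inj_on g (points I)"
  proof (rule inj_onI)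
    fix x x' assume xx': "x \<in> points I" "x' \<in> points I" "g x = g x'"
    then have "card {x, x'} \<le> fiber_card (g x)"
      unfolding fiber_card_def by (intro card_mono) auto
    thus "x = x'" using card_1 maps_into xx'(1) by (cases "x = x'") auto
  qed
  moreover have "g ` points I = points I" using image_eq_fiber_card_pos card_1 by auto
  ultimately show ?thesis unfolding bij_betw_def by simp
qed

lemma distinct_preimages_antipodal:
  assumes x: "x \<in> points I" and x': "x' \<in> points I" "g x' = g x" "x' \<noteq> x"
  shows "x' = bxor x (ones I)"
proof
  fix v
  show "x' v = bxor x (ones I) v"
  proof (cases "v \<in> I")
    case False
    thus ?thesis using x x' unfolding points_def bxor_def ones_def by auto
  next
    case True
    have "inj_on (\<lambda>x. (g x)(v := False)) {w \<in> points I. w v = x v}"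
      using slice_bij[OF True] bij_betw_def by blast
    then have "x' v \<noteq> x v" using x x' unfolding inj_on_def by auto
    thus ?thesis using True unfolding bxor_def ones_def by auto
  qed
qed

lemma fiber_card_zero_0_or_2_if_not_bij:
  assumes "\<not> bij_betw g (points I) (points I)"
  shows "fiber_card (\<lambda>_. False) = 0 \<or> fiber_card (\<lambda>_. False) = 2"
proof -
  have "I \<noteq> {}"
  proof
    assume "I = {}"
    then have "g ` points I = points I" using maps_into by (auto simp: points_empty)
    thus False using assms by (simp add: \<open>I = {}\<close> bij_betw_def points_empty)
  qed
  then obtain i where "i \<in> I" by blast
  then have "fiber_card (\<lambda>_. False) \<le> 2"
    using fiber_card_flip[of "\<lambda>_. False" i] by (simp add: points_def)
  moreover have "fiber_card (\<lambda>_. False) \<noteq> 1" using assms bij_if_fiber_card_zero_eq_1 by blast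
  ultimately show ?thesis by auto
qed

lemma image_parity_if_not_bij:
  assumes "\<not> bij_betw g (points I) (points I)"
  shows "g ` points I = {x \<in> points I. even (weight I x)}
           \<or> g ` points I = {x \<in> points I. odd (weight I x)}"
proof -
  have "y \<in> g ` points I \<longleftrightarrow> y \<in> points I \<and>
      (if even (weight I y) then 0 < fiber_card (\<lambda>_. False)
       else fiber_card (\<lambda>_. False) < 2)" for y
    using image_eq_fiber_card_pos fiber_card_by_parity by auto
  with fiber_card_zero_0_or_2_if_not_bij[OF assms] show ?thesis by (auto simp: set_eq_iff)
qed

lemma antipodal_collapse_if_not_bij:
  assumes "\<not> bij_betw g (points I) (points I)" and x: "x \<in> points I"
  shows "g (bxor x (ones I)) = g x"
proof -
  let ?S = "{w \<in> points I. g w = g x}"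
  have "g x \<in> points I" "0 < fiber_card (g x)" using image_eq_fiber_card_pos x by auto
  then have "fiber_card (g x) = 2"
    using fiber_card_zero_0_or_2_if_not_bij[OF assms(1)] fiber_card_by_parity[of "g x"] by auto
  then have "card ?S = 2" unfolding fiber_card_def .
  then have "card (?S - {x}) = 1" using x by simp
  then obtain x' where "?S - {x} = {x'}" by (meson card_1_singletonE)
  then have "x' \<in> points I" "g x' = g x" "x' \<noteq> x" by auto
  thus ?thesis using distinct_preimages_antipodal[OF x] by metis
qed

end

lemma conj_subnet_maps_into: "conj_net (subnet f I z) ` points I \<subseteq> points I"
  unfolding conj_net_def bxor_def subnet_def points_def by auto

lemma conj_subnet_fix_coordinate:
  assumes z: "z \<in> points (- I)" and i: "i \<in> I" and x: "x \<in> points I" "x i = a"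
  shows "(conj_net (subnet f I z) x)(i := False) =
         conj_net (subnet f (I - {i}) (z(i := a))) (x(i := False))"
proof -
  have "(\<lambda>w. if w \<in> I then x w else z w)
      = (\<lambda>w. if w \<in> I - {i} then (x(i := False)) w else (z(i := a)) w)"
    using i x by (auto simp: fun_eq_iff)
  then show ?thesis unfolding conj_net_def bxor_def subnet_def
    using x i by (auto simp: fun_eq_iff)
qed

lemma slice_bij_betw_conj_subnet:
  assumes z: "z \<in> points (- I)" and i: "i \<in> I"
    and bij: "bij_betw (conj_net (subnet f (I - {i}) (z(i := a))))
      (points (I - {i})) (points (I - {i}))"
  shows "bij_betw (\<lambda>x. (conj_net (subnet f I z) x)(i := False))
           {x \<in> points I. x i = a} (points (I - {i}))"
proof -
  have "bij_betw (\<lambda>x. x(i := False)) {x \<in> points I. x i = a} (points (I - {i}))"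
    by (rule bij_betw_byWitness[where f' = "\<lambda>w. w(i := a)"])
       (use i in \<open>auto simp: points_def fun_eq_iff split: if_splits\<close>)
  from bij_betw_trans[OF this bij] show ?thesis
    by (rule bij_betw_cong[THEN iffD1, rotated]) (use conj_subnet_fix_coordinate[OF z i] in auto)
qed

lemma bij_conj_subnet_if_no_parity_self_dual:
  fixes f :: "('v::finite \<Rightarrow> bool) \<Rightarrow> ('v \<Rightarrow> bool)"
  assumes no_parity_self_dual: "\<And>J z. J \<noteq> {} \<Longrightarrow> z \<in> points (- J) \<Longrightarrow>
      \<not> even_self_dual J (subnet f J z) \<and> \<not> odd_self_dual J (subnet f J z)"
  shows "z \<in> points (- I) \<Longrightarrow> bij_betw (conj_net (subnet f I z)) (points I) (points I)"
proof (induction I arbitrary: z rule: finite_remove_induct[OF finite])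
  case 1
  then show ?case using conj_subnet_maps_into[of f "{}" z] by (auto simp: points_empty bij_betw_def)
next
  case (2 I)
  let ?h = "subnet f I z"
  interpret slice_bijective I "conj_net ?h"
  proof
    show "conj_net ?h ` points I \<subseteq> points I" by (rule conj_subnet_maps_into)
    fix i a assume i: "i \<in> I"
    have "z(i := a) \<in> points (- (I - {i}))" using "2.prems" by (auto simp: points_def)
    with "2.IH"[OF i] show "bij_betw (\<lambda>x. (conj_net ?h x)(i := False))
        {x \<in> points I. x i = a} (points (I - {i}))"
      by (intro slice_bij_betw_conj_subnet[OF "2.prems" i])
  qed
  show ?case
  proof (rule ccontr)
    assume not_bij: "\<not> ?case"
    have "self_dual I ?h"
      using antipodal_collapse_if_not_bij[OF not_bij]
      by (simp add: self_dual_def conj_net_bxor_eq_iff)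
    with image_parity_if_not_bij[OF not_bij] have "even_self_dual I ?h \<or> odd_self_dual I ?h"
      unfolding even_self_dual_def odd_self_dual_def even_net_def odd_net_def by blast
    with no_parity_self_dual[OF "2.hyps"(2) "2.prems"] show False by blast
  qed
qed

theorem corollary1:
  fixes f :: "('v::finite \<Rightarrow> bool) \<Rightarrow> ('v \<Rightarrow> bool)"
  shows "(\<forall>I z. I \<noteq> {} \<and> z \<in> points (- I) \<longrightarrow>
            bij_betw (conj_net (subnet f I z)) (points I) (points I))
         \<longleftrightarrow>
         \<not> (\<exists>I z. I \<noteq> {} \<and> z \<in> points (- I) \<and>
            (even_self_dual I (subnet f I z) \<or> odd_self_dual I (subnet f I z)))"
proof (intro iffI notI)
  assume bij: "\<forall>I z. I \<noteq> {} \<and> z \<in> points (- I) \<longrightarrow>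
            bij_betw (conj_net (subnet f I z)) (points I) (points I)"
  assume "\<exists>I z. I \<noteq> {} \<and> z \<in> points (- I) \<and>
            (even_self_dual I (subnet f I z) \<or> odd_self_dual I (subnet f I z))"
  then obtain I z where I: "I \<noteq> {}" and z: "z \<in> points (- I)"
    and parity: "even_net I (subnet f I z) \<or> odd_net I (subnet f I z)"
    unfolding even_self_dual_def odd_self_dual_def by blast
  have "\<not> bij_betw (conj_net (subnet f I z)) (points I) (points I)"
    using parity_net_not_bij[OF I parity] .
  with bij I z show False by blast
next
  assume no_parity_self_dual: "\<not> (\<exists>I z. I \<noteq> {} \<and> z \<in> points (- I) \<and>
            (even_self_dual I (subnet f I z) \<or> odd_self_dual I (subnet f I z)))"
  have "\<not> even_self_dual J (subnet f J z) \<and> \<not> odd_self_dual J (subnet f J z)"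
    if "J \<noteq> {}" "z \<in> points (- J)" for J z
    using no_parity_self_dual that by blast
  then show "\<forall>I z. I \<noteq> {} \<and> z \<in> points (- I) \<longrightarrow>
            bij_betw (conj_net (subnet f I z)) (points I) (points I)"
    using bij_conj_subnet_if_no_parity_self_dual by blast
qed

end
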